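(* Let $L,R$ be nonempty subsets of a group $G$ and $s\in G$, and consider $2\mathrm{S}(G;L,R)$. (1) There exist words $w_{L,m}$ and $w_{L,n}$ in $L$ with $m\neq n$ such that $w_{L,m}s\sim w_{L,n}s$ if and only if there exists a word $w_{L,k}$ in $L$ of positive length with $w_{L,k}s\sim s$; moreover one can take $k=|m-n|$. (2) For $n\ge1$, there exists a word $w_{L,n}$ in $L$ with $w_{L,n}s\sim s$ if and only if there exists a word $w_{L^{-1},n}$ in $L^{-1}$ with $w_{L^{-1},n}s\sim s$. (3) If $g\in\langle L\rangle s\langle R\rangle$ and $k\ge 1$, then $w_{L,k}g\sim g$ for some word $w_{L,k}$ in $L$ of length $k$ if and only if $w'_{L,k}s\sim s$ for some word $w'_{L,k}$ in $L$ of length $k$.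
   Context: For nonempty subsets $L,R$ of a group $G$, the two-sided group digraph $2\mathrm{S}(G;L,R)$ has vertex set $G$ and a directed arc $(g,h)$ if and only if $h=l^{-1}gr$ for some $l\in L$, $r\in R$. $w_{S,n}$ denotes the value of a word $s_1\cdots s_n$ with $s_i\in S$. $g\sim h$ means $g$ is weakly connected to $h$: there is a sequence $g=g_0,\dots,g_n=h$ with, for each $i$, $(g_{i-1},g_i)$ or $(g_i,g_{i-1})$ an arc. $\langle S\rangle$ is the subgroup generated by $S$. *)

theory Defs
  imports "HOL-Algebra.Algebra"
begin

text \<open>Arc of the two-sided group digraph 2S(G;L,R): (g,h) is an arc iff h = l^-1 g r.\<close>
definition tsarc :: "('a, 'b) monoid_scheme \<Rightarrow> 'a set \<Rightarrow> 'a set \<Rightarrow> 'a \<Rightarrow> 'a \<Rightarrow> bool" where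
  "tsarc G L R g h \<longleftrightarrow> g \<in> carrier G \<and> h \<in> carrier G \<and>
     (\<exists>l\<in>L. \<exists>r\<in>R. h = inv\<^bsub>G\<^esub> l \<otimes>\<^bsub>G\<^esub> g \<otimes>\<^bsub>G\<^esub> r)"

definition weakly_conn :: "('a, 'b) monoid_scheme \<Rightarrow> 'a set \<Rightarrow> 'a set \<Rightarrow> 'a \<Rightarrow> 'a \<Rightarrow> bool" where
  "weakly_conn G L R g h \<longleftrightarrow>
     (\<lambda>x y. tsarc G L R x y \<or> tsarc G L R y x)\<^sup>*\<^sup>* g h"

definition word_val :: "('a, 'b) monoid_scheme \<Rightarrow> 'a list \<Rightarrow> 'a" where
  "word_val G ws = foldr (\<lambda>x y. x \<otimes>\<^bsub>G\<^esub> y) ws \<one>\<^bsub>G\<^esub>"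

definition is_word :: "'a set \<Rightarrow> nat \<Rightarrow> 'a list \<Rightarrow> bool" where
  "is_word S n ws \<longleftrightarrow> length ws = n \<and> set ws \<subseteq> S"

end

theory Submission
  imports Defs
begin

text \<open>
  Two arcs with a common endpoint show g ~ inv l * l' * g and g ~ l' * inv l * g for
  l, l' in L. Hence left multiplication by any element of \<langle>L\<rangle> preserves ~, and all
  letters of L act in the same way on ~-classes, so words of equal length in L act
  identically and commute with \<langle>L\<rangle>. Inversion is an isomorphism from 2S(G;L,R) onto
  2S(G;R,L), which turns this into right invariance under \<langle>R\<rangle>. The three parts then
  follow by cancelling a common prefix, inverting a word, and moving the outer factors
  of g = a s b out of the way.
\<close>

lemma weakly_conn_refl: "weakly_conn G L R x x"
  unfolding weakly_conn_def by simp

lemma weakly_conn_sym: "weakly_conn G L R x y \<Longrightarrow> weakly_conn G L R y x"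
  unfolding weakly_conn_def
  by (rule sympD[OF symp_rtranclp]) (auto simp: symp_def)

lemma weakly_conn_trans [trans]:
  "weakly_conn G L R x y \<Longrightarrow> weakly_conn G L R y z \<Longrightarrow> weakly_conn G L R x z"
  unfolding weakly_conn_def by simp

lemma weakly_conn_arc: "tsarc G L R x y \<Longrightarrow> weakly_conn G L R x y"
  unfolding weakly_conn_def by (simp add: r_into_rtranclp)

lemma weakly_conn_closed: "weakly_conn G L R x y \<Longrightarrow> x \<in> carrier G \<Longrightarrow> y \<in> carrier G"
  unfolding weakly_conn_def by (induction rule: rtranclp_induct) (auto simp: tsarc_def)

lemma weakly_conn_map:
  assumes "\<And>a b. tsarc G L R a b \<Longrightarrow> weakly_conn H L' R' (f a) (f b)"
    and "weakly_conn G L R x y"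
  shows "weakly_conn H L' R' (f x) (f y)"
  using assms(2) unfolding weakly_conn_def[of G]
proof (induction rule: rtranclp_induct)
  case base
  show ?case by (rule weakly_conn_refl)
next
  case (step y z)
  from step(2) have "weakly_conn H L' R' (f y) (f z)"
  proof
    assume "tsarc G L R z y"
    then show ?thesis by (rule weakly_conn_sym[OF assms(1)])
  qed (rule assms(1))
  with step(3) show ?case by (rule weakly_conn_trans)
qed

context monoid
begin

lemma word_val_Nil [simp]: "word_val G [] = \<one>"
  by (simp add: word_val_def)

lemma word_val_Cons [simp]: "word_val G (a # ws) = a \<otimes> word_val G ws"
  by (simp add: word_val_def)

lemma word_val_closed: "set ws \<subseteq> carrier G \<Longrightarrow> word_val G ws \<in> carrier G"
  by (induction ws) auto

lemma word_val_append:
  "set ws \<subseteq> carrier G \<Longrightarrow> set vs \<subseteq> carrier G \<Longrightarrow>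
   word_val G (ws @ vs) = word_val G ws \<otimes> word_val G vs"
  by (induction ws) (auto simp: word_val_closed m_assoc)

end

context group
begin

lemma inv_mult_cancel_left [simp]:
  "x \<in> carrier G \<Longrightarrow> y \<in> carrier G \<Longrightarrow> inv x \<otimes> (x \<otimes> y) = y"
  by (simp add: m_assoc [symmetric])

lemma mult_inv_cancel_left [simp]:
  "x \<in> carrier G \<Longrightarrow> y \<in> carrier G \<Longrightarrow> x \<otimes> (inv x \<otimes> y) = y"
  by (simp add: m_assoc [symmetric])

lemma word_val_rev_inv:
  "set ws \<subseteq> carrier G \<Longrightarrow> word_val G (rev (map (\<lambda>x. inv x) ws)) = inv (word_val G ws)"
proof (induction ws)
  case (Cons a ws)
  have "set (rev (map (\<lambda>x. inv x) ws)) \<subseteq> carrier G" using Cons.prems by auto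
  then show ?case
    using Cons by (simp add: word_val_append word_val_closed inv_mult_group)
qed simp

lemma word_val_in_generate:
  "set ws \<subseteq> generate G S \<Longrightarrow> word_val G ws \<in> generate G S"
  by (induction ws) (auto intro: generate.intros)

end

lemma is_word_rev_map: "is_word S n ws \<Longrightarrow> is_word (f ` S) n (rev (map f ws))"
  by (auto simp: is_word_def)

locale two_sided_digraph = group G for G (structure) +
  fixes L R :: "'a set"
  assumes L_closed: "L \<subseteq> carrier G" and R_closed: "R \<subseteq> carrier G"
    and L_nonempty: "L \<noteq> {}" and R_nonempty: "R \<noteq> {}"
begin

abbreviation conn :: "'a \<Rightarrow> 'a \<Rightarrow> bool" where
  "conn \<equiv> weakly_conn G L R"

lemma conn_arc: "x \<in> carrier G \<Longrightarrow> l \<in> L \<Longrightarrow> r \<in> R \<Longrightarrow> conn x (inv l \<otimes> x \<otimes> r)"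
  unfolding weakly_conn_def tsarc_def using L_closed R_closed
  by (intro r_into_rtranclp) auto

lemma conn_inv_mult_left:
  assumes "g \<in> carrier G" "l \<in> L" "l' \<in> L"
  shows "conn g (inv l \<otimes> l' \<otimes> g)"
proof -
  obtain r where r: "r \<in> R" using R_nonempty by blast
  have c: "l \<in> carrier G" "l' \<in> carrier G" "r \<in> carrier G"
    using assms r L_closed R_closed by auto
  have "conn g (l' \<otimes> g \<otimes> inv r)"
    using weakly_conn_sym[OF conn_arc[OF _ assms(3) r, of "l' \<otimes> g \<otimes> inv r"]] assms c
    by (simp add: m_assoc)
  also have "conn (l' \<otimes> g \<otimes> inv r) (inv l \<otimes> l' \<otimes> g)"
    using conn_arc[OF _ assms(2) r, of "l' \<otimes> g \<otimes> inv r"] assms c by (simp add: m_assoc)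
  finally show ?thesis .
qed

lemma conn_mult_inv_left:
  assumes "g \<in> carrier G" "l \<in> L" "l' \<in> L"
  shows "conn g (l' \<otimes> inv l \<otimes> g)"
proof -
  obtain r where r: "r \<in> R" using R_nonempty by blast
  have c: "l \<in> carrier G" "l' \<in> carrier G" "r \<in> carrier G"
    using assms r L_closed R_closed by auto
  have "conn g (inv l \<otimes> g \<otimes> r)"
    using conn_arc[OF _ assms(2) r] assms by simp
  also have "conn (inv l \<otimes> g \<otimes> r) (l' \<otimes> inv l \<otimes> g)"
    using weakly_conn_sym[OF conn_arc[OF _ assms(3) r, of "l' \<otimes> inv l \<otimes> g"]] assms c
    by (simp add: m_assoc)
  finally show ?thesis .
qed

lemma conn_letters:
  assumes "g \<in> carrier G" "l \<in> L" "l' \<in> L"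
  shows "conn (l \<otimes> g) (l' \<otimes> g)"
proof -
  have "l \<in> carrier G" "l' \<in> carrier G" using assms L_closed by auto
  then show ?thesis
    using conn_mult_inv_left[of "l \<otimes> g" l l'] assms by (simp add: m_assoc)
qed

lemma conn_mult_letter:
  assumes "l \<in> L" and "conn x y"
  shows "conn (l \<otimes> x) (l \<otimes> y)"
proof (rule weakly_conn_map[OF _ assms(2)])
  fix a b assume "tsarc G L R a b"
  then obtain l' r where arc: "a \<in> carrier G" "l' \<in> L" "r \<in> R" "b = inv l' \<otimes> a \<otimes> r"
    by (auto simp: tsarc_def)
  have c: "l \<in> carrier G" "l' \<in> carrier G" "r \<in> carrier G"
    using assms(1) arc L_closed R_closed by auto
  have "conn (l \<otimes> a) (a \<otimes> r)"
    using conn_arc[OF _ assms(1) arc(3), of "l \<otimes> a"] arc c by (simp add: m_assoc)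
  also have "conn (a \<otimes> r) (l \<otimes> inv l' \<otimes> (a \<otimes> r))"
    using conn_mult_inv_left arc c assms(1) by simp
  finally show "conn (l \<otimes> a) (l \<otimes> b)"
    using arc c by (simp add: m_assoc)
qed

lemma conn_mult_inv_letter:
  assumes "l \<in> L" and "conn x y"
  shows "conn (inv l \<otimes> x) (inv l \<otimes> y)"
proof (rule weakly_conn_map[OF _ assms(2)])
  fix a b assume "tsarc G L R a b"
  then obtain l' r where arc: "a \<in> carrier G" "l' \<in> L" "r \<in> R" "b = inv l' \<otimes> a \<otimes> r"
    by (auto simp: tsarc_def)
  have c: "l \<in> carrier G" "l' \<in> carrier G" "r \<in> carrier G"
    using assms(1) arc L_closed R_closed by auto
  have "conn (inv l \<otimes> a) (inv l' \<otimes> a)"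
    using conn_inv_mult_left[of "inv l \<otimes> a" l' l] arc c assms(1) by (simp add: m_assoc)
  also have "conn (inv l' \<otimes> a) (inv l \<otimes> b)"
    using conn_arc[OF _ assms(1) arc(3), of "inv l' \<otimes> a"] arc c by (simp add: m_assoc)
  finally show "conn (inv l \<otimes> a) (inv l \<otimes> b)"
    using arc c by (simp add: m_assoc)
qed

lemma generate_L_closed: "a \<in> generate G L \<Longrightarrow> a \<in> carrier G"
  using generate_in_carrier[OF L_closed] .

lemma conn_mult_left:
  assumes "a \<in> generate G L" and "x \<in> carrier G" and "conn x y"
  shows "conn (a \<otimes> x) (a \<otimes> y)"
  using assms
proof (induction arbitrary: x y rule: generate.induct)
  case one
  then show ?case using weakly_conn_closed[of G L R x y] by simp
next
  case (incl l)
  then show ?case using conn_mult_letter by blast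
next
  case (inv l)
  then show ?case using conn_mult_inv_letter by blast
next
  case (eng a1 a2)
  have "conn (a1 \<otimes> (a2 \<otimes> x)) (a1 \<otimes> (a2 \<otimes> y))"
    using eng generate_L_closed by simp
  moreover have "y \<in> carrier G" using eng weakly_conn_closed by metis
  ultimately show ?case
    using eng generate_L_closed by (simp add: m_assoc)
qed

lemma conn_mult_left_iff:
  assumes "a \<in> generate G L" and "x \<in> carrier G" and "y \<in> carrier G"
  shows "conn (a \<otimes> x) (a \<otimes> y) \<longleftrightarrow> conn x y"
proof
  assume "conn (a \<otimes> x) (a \<otimes> y)"
  moreover have "inv a \<in> generate G L" "a \<otimes> x \<in> carrier G"
    using generate_m_inv_closed[OF L_closed] generate_L_closed assms by auto
  ultimately have "conn (inv a \<otimes> (a \<otimes> x)) (inv a \<otimes> (a \<otimes> y))"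
    using conn_mult_left by blast
  then show "conn x y" using generate_L_closed assms by simp
qed (use conn_mult_left assms in simp)

lemma two_sided_digraph_swap: "two_sided_digraph G R L"
  by (intro two_sided_digraph.intro two_sided_digraph_axioms.intro is_group
      R_closed L_closed R_nonempty L_nonempty)

lemma tsarc_inv:
  assumes "tsarc G L R x y"
  shows "tsarc G R L (inv x) (inv y)"
proof -
  obtain l r where arc: "x \<in> carrier G" "l \<in> L" "r \<in> R" "y = inv l \<otimes> x \<otimes> r"
    using assms by (auto simp: tsarc_def)
  have c: "l \<in> carrier G" "r \<in> carrier G" using arc L_closed R_closed by auto
  then have "inv y = inv r \<otimes> inv x \<otimes> l"
    using arc by (simp add: inv_mult_group m_assoc)
  moreover have "inv y \<in> carrier G" using arc c by simp
  ultimately show ?thesis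
    unfolding tsarc_def using arc by blast
qed

lemma conn_inv_iff:
  assumes "x \<in> carrier G" and "y \<in> carrier G"
  shows "conn x y \<longleftrightarrow> weakly_conn G R L (inv x) (inv y)"
proof
  show "conn x y \<Longrightarrow> weakly_conn G R L (inv x) (inv y)"
    by (rule weakly_conn_map[where f = "\<lambda>x. inv x", OF weakly_conn_arc[OF tsarc_inv]])
next
  interpret swap: two_sided_digraph G R L by (rule two_sided_digraph_swap)
  assume "weakly_conn G R L (inv x) (inv y)"
  from weakly_conn_map[where f = "\<lambda>x. inv x", OF weakly_conn_arc[OF swap.tsarc_inv] this]
  show "conn x y" using assms by simp
qed

lemma conn_mult_right_iff:
  assumes "b \<in> generate G R" and "x \<in> carrier G" and "y \<in> carrier G"
  shows "conn (x \<otimes> b) (y \<otimes> b) \<longleftrightarrow> conn x y"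
proof -
  interpret swap: two_sided_digraph G R L by (rule two_sided_digraph_swap)
  have b: "b \<in> carrier G" using generate_in_carrier[OF R_closed assms(1)] .
  have "conn (x \<otimes> b) (y \<otimes> b) \<longleftrightarrow> weakly_conn G R L (inv b \<otimes> inv x) (inv b \<otimes> inv y)"
    using conn_inv_iff assms b by (simp add: inv_mult_group)
  also have "\<dots> \<longleftrightarrow> weakly_conn G R L (inv x) (inv y)"
    using swap.conn_mult_left_iff generate_m_inv_closed[OF R_closed] assms by simp
  also have "\<dots> \<longleftrightarrow> conn x y"
    using conn_inv_iff assms by simp
  finally show ?thesis .
qed

lemma conn_same_length_words:
  assumes "is_word L k u" and "is_word L k u'" and "h \<in> carrier G"
  shows "conn (word_val G u \<otimes> h) (word_val G u' \<otimes> h)"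
proof -
  have "length u = length u'" "set u \<subseteq> L" "set u' \<subseteq> L"
    using assms by (auto simp: is_word_def)
  then show ?thesis
  proof (induction u u' rule: list_induct2)
    case Nil
    show ?case by (rule weakly_conn_refl)
  next
    case (Cons a u b u')
    have c: "a \<in> carrier G" "b \<in> carrier G"
      "word_val G u \<in> carrier G" "word_val G u' \<in> carrier G"
      using Cons.prems L_closed word_val_closed by auto
    have "conn (a \<otimes> (word_val G u \<otimes> h)) (a \<otimes> (word_val G u' \<otimes> h))"
      using Cons conn_mult_letter by simp
    also have "conn (a \<otimes> (word_val G u' \<otimes> h)) (b \<otimes> (word_val G u' \<otimes> h))"
      using Cons.prems c assms(3) conn_letters by simp
    finally show ?case
      using c assms(3) Cons.prems L_closed by (simp add: m_assoc)
  qed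
qed

lemma conn_letter_commute:
  assumes "a \<in> generate G L" and "l \<in> L" and "h \<in> carrier G"
  shows "conn (l \<otimes> (a \<otimes> h)) (a \<otimes> (l \<otimes> h))"
  using assms
proof (induction arbitrary: h rule: generate.induct)
  case one
  then have "l \<in> carrier G" using L_closed by auto
  with one show ?case by (simp add: weakly_conn_refl)
next
  case (incl l')
  have "conn (l \<otimes> (l' \<otimes> h)) (l' \<otimes> (l' \<otimes> h))"
    using incl L_closed conn_letters by auto
  also have "conn (l' \<otimes> (l' \<otimes> h)) (l' \<otimes> (l \<otimes> h))"
    using conn_letters[OF incl.prems(2,1) incl.hyps]
    by (rule weakly_conn_sym[OF conn_mult_letter[OF incl.hyps]])
  finally show ?case .
next
  case (inv l')
  have c: "l \<in> carrier G" "l' \<in> carrier G" using inv L_closed by auto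
  have "conn (l \<otimes> (inv l' \<otimes> h)) h"
    using weakly_conn_sym[OF conn_mult_inv_left[OF inv.prems(2) inv.hyps inv.prems(1)]] c inv.prems
    by (simp add: m_assoc)
  also have "conn h (inv l' \<otimes> (l \<otimes> h))"
    using conn_inv_mult_left[of h l' l] inv c by (simp add: m_assoc)
  finally show ?case .
next
  case (eng a1 a2)
  have c: "a1 \<in> carrier G" "a2 \<in> carrier G" "l \<in> carrier G"
    using eng generate_L_closed L_closed by auto
  have "conn (l \<otimes> (a1 \<otimes> (a2 \<otimes> h))) (a1 \<otimes> (l \<otimes> (a2 \<otimes> h)))"
    using eng c by simp
  also have "conn (a1 \<otimes> (l \<otimes> (a2 \<otimes> h))) (a1 \<otimes> (a2 \<otimes> (l \<otimes> h)))"
    using eng c conn_mult_left by simp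
  finally show ?case using c eng by (simp add: m_assoc)
qed

lemma conn_word_commute:
  assumes "set w \<subseteq> L" and "a \<in> generate G L" and "h \<in> carrier G"
  shows "conn (word_val G w \<otimes> (a \<otimes> h)) (a \<otimes> (word_val G w \<otimes> h))"
  using assms(1)
proof (induction w)
  case Nil
  then show ?case using assms generate_L_closed by (auto intro: weakly_conn_refl)
next
  case (Cons l w)
  have c: "a \<in> carrier G" "l \<in> carrier G" "word_val G w \<in> carrier G"
    using Cons.prems assms generate_L_closed L_closed word_val_closed by auto
  have "conn (l \<otimes> (word_val G w \<otimes> (a \<otimes> h))) (l \<otimes> (a \<otimes> (word_val G w \<otimes> h)))"
    using Cons conn_mult_letter by simp
  also have "conn (l \<otimes> (a \<otimes> (word_val G w \<otimes> h))) (a \<otimes> (l \<otimes> (word_val G w \<otimes> h)))"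
    using Cons.prems assms c conn_letter_commute by simp
  finally show ?case using c assms by (simp add: m_assoc)
qed

lemma word_in_generate: "is_word L k w \<Longrightarrow> word_val G w \<in> generate G L"
  by (rule word_val_in_generate) (auto simp: is_word_def intro: generate.incl)

lemma conn_longer_word:
  assumes "is_word L m ws" and "is_word L n vs" and "m \<le> n" and "s \<in> carrier G"
    and "conn (word_val G ws \<otimes> s) (word_val G vs \<otimes> s)"
  shows "\<exists>us. is_word L (n - m) us \<and> conn (word_val G us \<otimes> s) s"
proof -
  define p q where "p = take m vs" and "q = drop m vs"
  have words: "is_word L m p" "is_word L (n - m) q"
    using assms(2,3) by (auto simp: p_def q_def is_word_def dest: in_set_takeD in_set_dropD)
  then have c: "set p \<subseteq> carrier G" "set q \<subseteq> carrier G"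
    using L_closed by (auto simp: is_word_def)
  have cw: "word_val G p \<in> carrier G" "word_val G q \<in> carrier G"
    using c word_val_closed by auto
  have "word_val G vs = word_val G p \<otimes> word_val G q"
    using word_val_append[OF c] by (simp add: p_def q_def)
  then have split: "word_val G vs \<otimes> s = word_val G p \<otimes> (word_val G q \<otimes> s)"
    using cw assms(4) by (simp add: m_assoc)
  have "conn (word_val G p \<otimes> s) (word_val G ws \<otimes> s)"
    using conn_same_length_words words(1) assms(1,4) .
  also note assms(5)
  finally have "conn (word_val G p \<otimes> s) (word_val G p \<otimes> (word_val G q \<otimes> s))"
    unfolding split .
  then have "conn s (word_val G q \<otimes> s)"
    using conn_mult_left_iff[OF word_in_generate[OF words(1)] assms(4)] cw assms(4) by simp
  then have "conn (word_val G q \<otimes> s) s" by (rule weakly_conn_sym)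
  with words(2) show ?thesis by blast
qed

lemma conn_words_distance:
  assumes "is_word L m ws" and "is_word L n vs" and "s \<in> carrier G"
    and "conn (word_val G ws \<otimes> s) (word_val G vs \<otimes> s)"
  shows "\<exists>us. is_word L (if m \<le> n then n - m else m - n) us \<and> conn (word_val G us \<otimes> s) s"
proof (cases "m \<le> n")
  case True
  then show ?thesis using conn_longer_word assms by simp
next
  case False
  then show ?thesis
    using conn_longer_word[OF assms(2,1) _ assms(3) weakly_conn_sym[OF assms(4)]] by simp
qed

lemma conn_words_distinct_lengths_iff:
  assumes "s \<in> carrier G"
  shows "(\<exists>m n ws vs. m \<noteq> n \<and> is_word L m ws \<and> is_word L n vs \<and>
            conn (word_val G ws \<otimes> s) (word_val G vs \<otimes> s))
     \<longleftrightarrow> (\<exists>k us. k > 0 \<and> is_word L k us \<and> conn (word_val G us \<otimes> s) s)"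
proof
  assume "\<exists>m n ws vs. m \<noteq> n \<and> is_word L m ws \<and> is_word L n vs \<and>
      conn (word_val G ws \<otimes> s) (word_val G vs \<otimes> s)"
  then obtain m n ws vs where "m \<noteq> n" "is_word L m ws" "is_word L n vs"
    "conn (word_val G ws \<otimes> s) (word_val G vs \<otimes> s)"
    by blast
  moreover from \<open>m \<noteq> n\<close> have "(if m \<le> n then n - m else m - n) > 0" by simp
  ultimately show "\<exists>k us. k > 0 \<and> is_word L k us \<and> conn (word_val G us \<otimes> s) s"
    using conn_words_distance assms by blast
next
  assume "\<exists>k us. k > 0 \<and> is_word L k us \<and> conn (word_val G us \<otimes> s) s"
  then obtain k us where "k \<noteq> 0" "is_word L k us" "conn (word_val G us \<otimes> s) (word_val G [] \<otimes> s)"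
    using assms by auto
  moreover have "is_word L 0 []" by (simp add: is_word_def)
  ultimately show "\<exists>m n ws vs. m \<noteq> n \<and> is_word L m ws \<and> is_word L n vs \<and>
      conn (word_val G ws \<otimes> s) (word_val G vs \<otimes> s)"
    by blast
qed

lemma conn_inverse_word:
  assumes "set ws \<subseteq> generate G L" and "s \<in> carrier G" and "conn (word_val G ws \<otimes> s) s"
  shows "conn (word_val G (rev (map (\<lambda>x. inv x) ws)) \<otimes> s) s"
proof -
  have "set ws \<subseteq> carrier G" using assms(1) generate_incl[OF L_closed] by blast
  then have w: "word_val G (rev (map (\<lambda>x. inv x) ws)) = inv (word_val G ws)"
    and c: "word_val G ws \<in> carrier G"
    using word_val_rev_inv word_val_closed by auto
  have "inv (word_val G ws) \<in> generate G L"
    using generate_m_inv_closed[OF L_closed] word_val_in_generate assms(1) by blast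
  from conn_mult_left[OF this _ assms(3)]
  have "conn (inv (word_val G ws) \<otimes> (word_val G ws \<otimes> s)) (inv (word_val G ws) \<otimes> s)"
    using c assms(2) by simp
  then have "conn s (word_val G (rev (map (\<lambda>x. inv x) ws)) \<otimes> s)"
    using w c assms(2) by simp
  then show ?thesis by (rule weakly_conn_sym)
qed

lemma conn_word_inv_letters_iff:
  assumes "s \<in> carrier G"
  shows "(\<exists>ws. is_word L n ws \<and> conn (word_val G ws \<otimes> s) s) \<longleftrightarrow>
    (\<exists>ws. is_word ((\<lambda>x. inv x) ` L) n ws \<and> conn (word_val G ws \<otimes> s) s)"
proof
  assume "\<exists>ws. is_word L n ws \<and> conn (word_val G ws \<otimes> s) s"
  then obtain ws where "is_word L n ws" "conn (word_val G ws \<otimes> s) s" by blast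
  moreover have "set ws \<subseteq> generate G L"
    using \<open>is_word L n ws\<close> by (auto simp: is_word_def intro: generate.incl)
  ultimately show "\<exists>ws. is_word ((\<lambda>x. inv x) ` L) n ws \<and> conn (word_val G ws \<otimes> s) s"
    using is_word_rev_map[where f = "\<lambda>x. inv x"] conn_inverse_word assms by blast
next
  assume "\<exists>ws. is_word ((\<lambda>x. inv x) ` L) n ws \<and> conn (word_val G ws \<otimes> s) s"
  then obtain ws where ws: "is_word ((\<lambda>x. inv x) ` L) n ws" "conn (word_val G ws \<otimes> s) s"
    by blast
  have "(\<lambda>x. inv x) ` (\<lambda>x. inv x) ` L = L"
    using L_closed by (force simp: image_image)
  then have "is_word L n (rev (map (\<lambda>x. inv x) ws))"
    using is_word_rev_map[OF ws(1), where f = "\<lambda>x. inv x"] by simp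
  moreover have "set ws \<subseteq> generate G L"
    using ws(1) by (auto simp: is_word_def intro: generate.inv)
  ultimately show "\<exists>ws. is_word L n ws \<and> conn (word_val G ws \<otimes> s) s"
    using conn_inverse_word ws(2) assms by blast
qed

lemma conn_word_double_coset_iff:
  assumes "a \<in> generate G L" and "b \<in> generate G R" and "s \<in> carrier G" and "set w \<subseteq> L"
  shows "conn (word_val G w \<otimes> (a \<otimes> s \<otimes> b)) (a \<otimes> s \<otimes> b) \<longleftrightarrow> conn (word_val G w \<otimes> s) s"
proof -
  have c: "a \<in> carrier G" "b \<in> carrier G" "word_val G w \<in> carrier G"
    using assms generate_L_closed generate_in_carrier[OF R_closed] L_closed word_val_closed
    by auto
  have "conn (word_val G w \<otimes> (a \<otimes> s \<otimes> b)) (a \<otimes> s \<otimes> b) \<longleftrightarrow>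
        conn (word_val G w \<otimes> (a \<otimes> s)) (a \<otimes> s)"
    using conn_mult_right_iff[OF assms(2), of "word_val G w \<otimes> (a \<otimes> s)" "a \<otimes> s"] c assms(3)
    by (simp add: m_assoc)
  also have "\<dots> \<longleftrightarrow> conn (a \<otimes> (word_val G w \<otimes> s)) (a \<otimes> s)"
  proof -
    have commute: "conn (word_val G w \<otimes> (a \<otimes> s)) (a \<otimes> (word_val G w \<otimes> s))"
      by (rule conn_word_commute[OF assms(4,1,3)])
    show ?thesis
      using weakly_conn_trans[OF commute] weakly_conn_trans[OF weakly_conn_sym[OF commute]]
      by blast
  qed
  also have "\<dots> \<longleftrightarrow> conn (word_val G w \<otimes> s) s"
    using conn_mult_left_iff[OF assms(1)] c assms(3) by simp
  finally show ?thesis .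
qed

end

theorem mainTheorem15:
  fixes G (structure) and L R :: "'a set" and s :: 'a
  assumes "group G" and "L \<subseteq> carrier G" and "R \<subseteq> carrier G"
    and "L \<noteq> {}" and "R \<noteq> {}" and "s \<in> carrier G"
  shows
    "((\<exists>m n ws vs. m \<noteq> n \<and> is_word L m ws \<and> is_word L n vs \<and>
         weakly_conn G L R (word_val G ws \<otimes> s) (word_val G vs \<otimes> s))
      \<longleftrightarrow> (\<exists>k us. k > 0 \<and> is_word L k us \<and> weakly_conn G L R (word_val G us \<otimes> s) s))
     \<and> (\<forall>m n ws vs. m \<noteq> n \<and> is_word L m ws \<and> is_word L n vs \<and>
         weakly_conn G L R (word_val G ws \<otimes> s) (word_val G vs \<otimes> s)
         \<longrightarrow> (\<exists>us. is_word L (if m \<le> n then n - m else m - n) us \<and>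
                   weakly_conn G L R (word_val G us \<otimes> s) s))
     \<and> (\<forall>n \<ge> 1. (\<exists>ws. is_word L n ws \<and> weakly_conn G L R (word_val G ws \<otimes> s) s)
         \<longleftrightarrow> (\<exists>ws. is_word ((\<lambda>x. inv x) ` L) n ws \<and> weakly_conn G L R (word_val G ws \<otimes> s) s))
     \<and> (\<forall>g k. g \<in> {a \<otimes> s \<otimes> b | a b. a \<in> generate G L \<and> b \<in> generate G R} \<and> k \<ge> 1 \<longrightarrow>
         ((\<exists>ws. is_word L k ws \<and> weakly_conn G L R (word_val G ws \<otimes> g) g)
          \<longleftrightarrow> (\<exists>ws. is_word L k ws \<and> weakly_conn G L R (word_val G ws \<otimes> s) s)))"
proof -
  interpret two_sided_digraph G L R
    using assms by (simp add: two_sided_digraph_def two_sided_digraph_axioms_def)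
  show ?thesis
  proof (intro conjI allI impI conn_words_distinct_lengths_iff[OF assms(6)]
      conn_word_inv_letters_iff[OF assms(6)])
    fix m n ws vs
    assume "m \<noteq> n \<and> is_word L m ws \<and> is_word L n vs \<and>
      conn (word_val G ws \<otimes> s) (word_val G vs \<otimes> s)"
    then show "\<exists>us. is_word L (if m \<le> n then n - m else m - n) us \<and>
        conn (word_val G us \<otimes> s) s"
      using conn_words_distance assms(6) by blast
  next
    fix g and k :: nat
    assume "g \<in> {a \<otimes> s \<otimes> b | a b. a \<in> generate G L \<and> b \<in> generate G R} \<and> k \<ge> 1"
    then obtain a b where "g = a \<otimes> s \<otimes> b" "a \<in> generate G L" "b \<in> generate G R" by blast
    then show "(\<exists>ws. is_word L k ws \<and> conn (word_val G ws \<otimes> g) g)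
        \<longleftrightarrow> (\<exists>ws. is_word L k ws \<and> conn (word_val G ws \<otimes> s) s)"
      using conn_word_double_coset_iff assms(6) by (auto simp: is_word_def)
  qed
qed

end
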